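(* Let $q>1$. For all $m\in\mathbb{N}\cup\{0\}$, $n\in\mathbb{N}$ and $z\in\mathbb{C}$, \[U_{n,q}(e_{m+1};z)=\frac{q^m z(1-z)}{[n+m]_q}D_qU_{n,q}(e_m;z)+\frac{q^m[n]_qz+[m]_q}{[n+m]_q}U_{n,q}(e_m;z).\]
   Context: For an integer $n\ge 0$ and $p>0$: $[n]_p=1+p+\dots+p^{n-1}$ ($[0]_p=0$), $[n]_p!=[1]_p\cdots[n]_p$ ($[0]_p!=1$), $\left[\begin{smallmatrix}n\\k\end{smallmatrix}\right]_p=\frac{[n]_p!}{[k]_p![n-k]_p!}$. For $z\in\mathbb{C}$, $(1-z)_p^n=\prod_{s=0}^{n-1}(1-p^s z)$ and $p_{n,k}(p;z)=\left[\begin{smallmatrix}n\\k\end{smallmatrix}\right]_p z^k(1-z)_p^{n-k}$. For $0<p<1$, $\int_0^1 g(t)\,d_pt=(1-p)\sum_{j=0}^\infty g(p^j)p^j$. For $q>1$, $n\in\mathbb{N}$ and $f:[0,1]\to\mathbb{C}$, \[U_{n,q}(f;z)=f(0)p_{n,0}(q;z)+f(1)p_{n,n}(q;z)+[n-1]_{q^{-1}}\sum_{k=1}^{n-1}q^{k-1}p_{n,k}(q;z)\int_0^1 p_{n-2,k-1}(q^{-1};q^{-1}t)\,f(q^{k-n}t)\,d_{q^{-1}}t\] (sum empty for $n=1$). $e_m(t)=t^m$. $D_qg(z)=\frac{g(qz)-g(z)}{(q-1)z}$ for $z\neq0$ and $D_qg(0)=g'(0)$. *)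

theory Defs
  imports "HOL-Analysis.Analysis"
begin

definition qint :: "real \<Rightarrow> nat \<Rightarrow> real" where
  "qint p n = (\<Sum>i<n. p ^ i)"

definition qfact :: "real \<Rightarrow> nat \<Rightarrow> real" where
  "qfact p n = (\<Prod>i=1..n. qint p i)"

definition qbinom :: "real \<Rightarrow> nat \<Rightarrow> nat \<Rightarrow> real" where
  "qbinom p n k = qfact p n / (qfact p k * qfact p (n - k))"

definition qpoch :: "real \<Rightarrow> nat \<Rightarrow> complex \<Rightarrow> complex" where
  "qpoch p n z = (\<Prod>s<n. 1 - complex_of_real (p ^ s) * z)"

definition pnk :: "real \<Rightarrow> nat \<Rightarrow> nat \<Rightarrow> complex \<Rightarrow> complex" where
  "pnk p n k z = complex_of_real (qbinom p n k) * z ^ k * qpoch p (n - k) z"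

text \<open>Jackson q-integral over [0,1] for 0 < p < 1.\<close>
definition qintegral :: "real \<Rightarrow> (real \<Rightarrow> complex) \<Rightarrow> complex" where
  "qintegral p g = complex_of_real (1 - p) * (\<Sum>j. g (p ^ j) * complex_of_real (p ^ j))"

text \<open>The operator U_{n,q}; note q^{k-n} t = t / q^(n-k) since k < n.\<close>
definition Uop :: "nat \<Rightarrow> real \<Rightarrow> (real \<Rightarrow> complex) \<Rightarrow> complex \<Rightarrow> complex" where
  "Uop n q f z =
     f 0 * pnk q n 0 z + f 1 * pnk q n n z
     + complex_of_real (qint (1 / q) (n - 1)) *
       (\<Sum>k = 1..n - 1. complex_of_real (q ^ (k - 1)) * pnk q n k z *
          qintegral (1 / q)
            (\<lambda>t. pnk (1 / q) (n - 2) (k - 1) (complex_of_real (t / q)) * f (t / q ^ (n - k))))"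

definition emon :: "nat \<Rightarrow> real \<Rightarrow> complex" where
  "emon m t = complex_of_real (t ^ m)"

definition Dq :: "real \<Rightarrow> (complex \<Rightarrow> complex) \<Rightarrow> complex \<Rightarrow> complex" where
  "Dq q g z = (if z = 0 then deriv g 0
               else (g (complex_of_real q * z) - g z) / ((complex_of_real q - 1) * z))"

end

theory Submission
  imports Defs
begin

text \<open>Writing U_{n,q}(f) = \<Sum>_k c_k(f) p_{n,k}(q; z), the interior coefficients of a monomial are
  Jackson integrals that evaluate to q-Beta series, and the contiguity relation of the
  q-Beta series gives c_k(e_(m+1)) = c_k(e_m) [k+m]_q / [n+m]_q at every node k.  On the other hand
  the q-derivative acts diagonally on the basis: z(1-z) D_q p_{n,k} = ([k]_q - [n]_q z) p_{n,k}.
  Since q^m ([k]_q - [n]_q z) + q^m [n]_q z + [m]_q = [k+m]_q, the two sides agree term by term.\<close>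

lemma qint_eq_geometric: "q \<noteq> 1 \<Longrightarrow> qint q i = (1 - q ^ i) / (1 - q)"
  unfolding qint_def by (simp add: sum_gp_strict)

lemma qint_add: "qint q (k + m) = qint q m + q ^ m * qint q k"
  by (induction k) (simp_all add: qint_def power_add algebra_simps)

lemma qint_mult_pred: "(q - 1) * qint q k = q ^ k - 1"
  by (induction k) (simp_all add: qint_def algebra_simps)

lemma qint_pos: "q > 0 \<Longrightarrow> i > 0 \<Longrightarrow> qint q i > 0"
  unfolding qint_def by (intro sum_pos) auto

lemma qint_ratio_reciprocal:
  fixes q :: real assumes q: "q > 1" and k: "k \<le> n"
  shows "(1 / q) ^ (n - k) * (1 - (1 / q) ^ (k + m)) / (1 - (1 / q) ^ (n + m)) = qint q (k + m) / qint q (n + m)"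
proof -
  define x where "x = q ^ (k + m)"
  define y where "y = q ^ (n - k)"
  have xy: "q ^ (n + m) = x * y"
    using k by (simp add: x_def y_def add.commute flip: power_add)
  have "x \<ge> 1" "y \<ge> 1"
    using q by (simp_all add: x_def y_def one_le_power)
  then have "(1 / y) * (1 - 1 / x) / (1 - 1 / (x * y)) = (1 - x) / (1 - x * y)"
    by (cases "x * y = 1") (simp_all add: field_simps)
  also have "\<dots> = ((1 - x) / (1 - q)) / ((1 - x * y) / (1 - q))"
    using q by simp
  finally have "(1 / y) * (1 - 1 / x) / (1 - 1 / (x * y)) = ((1 - x) / (1 - q)) / ((1 - x * y) / (1 - q))" .
  moreover have "qint q (k + m) = (1 - x) / (1 - q)" "qint q (n + m) = (1 - x * y) / (1 - q)"
    using q by (simp_all add: qint_eq_geometric x_def xy)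
  moreover have "(1 / q) ^ (n - k) = 1 / y" "(1 / q) ^ (k + m) = 1 / x" "(1 / q) ^ (n + m) = 1 / (x * y)"
    by (simp_all add: power_one_over x_def y_def xy)
  ultimately show ?thesis
    by simp
qed

text \<open>Up to the factor 1 - p, this is the Jackson integral of t^(a-1) (pt; p)_N over [0,1],
  a q-analogue of the Beta function B(a, N+1).\<close>
definition qbeta_series :: "real \<Rightarrow> nat \<Rightarrow> nat \<Rightarrow> real" where
  "qbeta_series p N a = (\<Sum>j. p ^ (j * a) * (\<Prod>s<N. 1 - p ^ (j + s + 1)))"

lemma qbeta_weight_bounds:
  fixes p :: real assumes "0 < p" "p < 1"
  shows "0 \<le> (\<Prod>s<N. 1 - p ^ (j + s + 1))" "(\<Prod>s<N. 1 - p ^ (j + s + 1)) \<le> 1"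
proof -
  have "0 \<le> 1 - p ^ (j + s + 1) \<and> 1 - p ^ (j + s + 1) \<le> 1" for s
    using assms power_le_one[of p "j + s + 1"] by simp
  then show "0 \<le> (\<Prod>s<N. 1 - p ^ (j + s + 1))" "(\<Prod>s<N. 1 - p ^ (j + s + 1)) \<le> 1"
    by (simp_all add: prod_nonneg prod_le_1)
qed

lemma summable_qbeta_series:
  fixes p :: real assumes p: "0 < p" "p < 1" and a: "a \<ge> 1"
  shows "summable (\<lambda>j. p ^ (j * a) * (\<Prod>s<N. 1 - p ^ (j + s + 1)))"
proof (rule summable_comparison_test)
  show "\<exists>M. \<forall>j\<ge>M. norm (p ^ (j * a) * (\<Prod>s<N. 1 - p ^ (j + s + 1))) \<le> (p ^ a) ^ j"
    using qbeta_weight_bounds[OF p] p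
    by (auto simp: abs_mult power_mult[symmetric] mult.commute intro!: mult_left_le)
  show "summable (\<lambda>j. (p ^ a) ^ j)"
    using p a by (intro summable_geometric) (simp add: power_less_one_iff)
qed

text \<open>The q-analogue of B(a+1, N+1) = a/(a+N+1) B(a, N+1): telescope
  F j = p^(ja) (p^j; p)_(N+1), which vanishes at j = 0 and tends to 0.\<close>
lemma qbeta_series_Suc:
  fixes p :: real assumes p: "0 < p" "p < 1" and a: "a \<ge> 1"
  shows "qbeta_series p N (Suc a) = (1 - p ^ a) / (1 - p ^ (a + N + 1)) * qbeta_series p N a"
proof -
  define w where "w j = (\<Prod>s<N. 1 - p ^ (j + s + 1))" for j
  define F where "F j = p ^ (j * a) * (\<Prod>s<Suc N. 1 - p ^ (j + s))" for j
  have F: "F j = p ^ (j * a) * ((1 - p ^ j) * w j)" for j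
    unfolding F_def w_def by (subst prod.lessThan_Suc_shift) (simp add: add.assoc)
  have F_Suc: "F (Suc j) = p ^ a * p ^ (j * a) * (w j * (1 - p ^ (j + N + 1)))" for j
    unfolding F_def w_def by (subst prod.lessThan_Suc) (simp add: power_add add_ac)
  have F_diff: "F j - F (Suc j)
      = (1 - p ^ a) * (p ^ (j * a) * w j) - (1 - p ^ (a + N + 1)) * (p ^ (j * Suc a) * w j)" for j
    unfolding F_Suc by (simp only: F[of j]) (simp add: algebra_simps power_add)
  have "F \<longlonglongrightarrow> 0"
  proof (rule Lim_null_comparison)
    have "\<bar>w j\<bar> * \<bar>1 - p ^ j\<bar> \<le> 1" for j
      using qbeta_weight_bounds[OF p] p by (intro mult_le_one) (auto simp: w_def power_le_one)
    then show "\<forall>\<^sub>F j in sequentially. norm (F j) \<le> (p ^ a) ^ j"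
      using p by (auto simp: F abs_mult power_mult[symmetric] mult.commute intro!: mult_left_le)
    show "(\<lambda>j. (p ^ a) ^ j) \<longlonglongrightarrow> 0"
      using p a by (intro LIMSEQ_power_zero) (simp add: power_less_one_iff)
  qed
  from telescope_sums'[OF this] have "(\<lambda>j. F j - F (Suc j)) sums 0"
    by (simp add: F)
  moreover have "(\<lambda>j. F j - F (Suc j)) sums
      ((1 - p ^ a) * qbeta_series p N a - (1 - p ^ (a + N + 1)) * qbeta_series p N (Suc a))"
    unfolding F_diff qbeta_series_def w_def
    using summable_qbeta_series[OF p a] summable_qbeta_series[OF p, of "Suc a"]
    by (intro sums_diff sums_mult summable_sums) auto
  ultimately have "(1 - p ^ a) * qbeta_series p N a = (1 - p ^ (a + N + 1)) * qbeta_series p N (Suc a)"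
    using sums_unique2 by fastforce
  moreover have "p ^ (a + N + 1) < 1"
    using p by (intro power_less_one_iff[THEN iffD2]) auto
  ultimately show ?thesis
    by (simp add: field_simps)
qed

lemma jackson_term_pnk_emon:
  fixes p :: real
  shows "pnk p N i (complex_of_real (p ^ j * p)) * emon m (p ^ j * p ^ d) * complex_of_real (p ^ j)
    = complex_of_real (qbinom p N i * p ^ i * p ^ (d * m) *
        (p ^ (j * (i + m + 1)) * (\<Prod>s<N - i. 1 - p ^ (j + s + 1))))"
proof -
  have powers: "(p ^ j * p) ^ i * (p ^ j * p ^ d) ^ m * p ^ j = p ^ i * p ^ (d * m) * p ^ (j * (i + m + 1))"
    by (simp add: power_mult_distrib power_mult[symmetric] power_add[symmetric] algebra_simps)
  have weight: "(\<Prod>s<N - i. 1 - p ^ s * (p ^ j * p)) = (\<Prod>s<N - i. 1 - p ^ (j + s + 1))"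
    by (simp add: power_add mult_ac)
  have "pnk p N i (complex_of_real (p ^ j * p)) * emon m (p ^ j * p ^ d) * complex_of_real (p ^ j)
      = complex_of_real (qbinom p N i * (\<Prod>s<N - i. 1 - p ^ s * (p ^ j * p)) *
          ((p ^ j * p) ^ i * (p ^ j * p ^ d) ^ m * p ^ j))"
    unfolding pnk_def qpoch_def emon_def by (simp add: of_real_prod mult_ac)
  then show ?thesis
    unfolding powers weight by (simp add: mult_ac)
qed

lemma qintegral_pnk_emon:
  fixes p :: real assumes p: "0 < p" "p < 1"
  shows "qintegral p (\<lambda>t. pnk p N i (complex_of_real (t * p)) * emon m (t * p ^ d))
    = complex_of_real ((1 - p) * qbinom p N i * p ^ i * p ^ (d * m) * qbeta_series p (N - i) (i + m + 1))"
proof -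
  define C where "C = qbinom p N i * p ^ i * p ^ (d * m)"
  have "(\<lambda>j. p ^ (j * (i + m + 1)) * (\<Prod>s<N - i. 1 - p ^ (j + s + 1))) sums qbeta_series p (N - i) (i + m + 1)"
    unfolding qbeta_series_def by (intro summable_sums summable_qbeta_series[OF p]) simp
  then have "(\<lambda>j. pnk p N i (complex_of_real (p ^ j * p)) * emon m (p ^ j * p ^ d) * complex_of_real (p ^ j))
      sums complex_of_real (C * qbeta_series p (N - i) (i + m + 1))"
    unfolding jackson_term_pnk_emon sums_of_real_iff C_def by (intro sums_mult)
  then show ?thesis
    unfolding qintegral_def C_def by (simp add: sums_iff mult_ac)
qed

definition Ucoeff :: "nat \<Rightarrow> real \<Rightarrow> (real \<Rightarrow> complex) \<Rightarrow> nat \<Rightarrow> complex" where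
  "Ucoeff n q f k =
     (if k = 0 then f 0 else if k = n then f 1
      else complex_of_real (qint (1 / q) (n - 1) * q ^ (k - 1)) *
        qintegral (1 / q) (\<lambda>t. pnk (1 / q) (n - 2) (k - 1) (complex_of_real (t / q)) * f (t / q ^ (n - k))))"

lemma Uop_eq_sum_Ucoeff:
  assumes "n \<ge> 1"
  shows "Uop n q f z = (\<Sum>k=0..n. Ucoeff n q f k * pnk q n k z)"
proof -
  have "{0..n} = insert 0 (insert n {1..n - 1})"
    using assms by auto
  then have "(\<Sum>k=0..n. Ucoeff n q f k * pnk q n k z)
      = f 0 * pnk q n 0 z + f 1 * pnk q n n z + (\<Sum>k=1..n - 1. Ucoeff n q f k * pnk q n k z)"
    using assms by (simp add: Ucoeff_def)
  also have "(\<Sum>k=1..n - 1. Ucoeff n q f k * pnk q n k z) =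
      complex_of_real (qint (1 / q) (n - 1)) * (\<Sum>k=1..n - 1. complex_of_real (q ^ (k - 1)) * pnk q n k z *
        qintegral (1 / q) (\<lambda>t. pnk (1 / q) (n - 2) (k - 1) (complex_of_real (t / q)) * f (t / q ^ (n - k))))"
    unfolding sum_distrib_left by (rule sum.cong) (auto simp: Ucoeff_def mult_ac)
  finally show ?thesis
    unfolding Uop_def by simp
qed

lemma Ucoeff_emon_Suc:
  fixes q :: real assumes q: "q > 1" and k: "k \<le> n" and n: "n \<ge> 1"
  shows "Ucoeff n q (emon (Suc m)) k = Ucoeff n q (emon m) k * complex_of_real (qint q (k + m) / qint q (n + m))"
proof -
  consider "k = 0" | "k = n" | "1 \<le> k" "k < n"
    using k by linarith
  then show ?thesis
  proof cases
    case 1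
    then show ?thesis
      by (cases m) (auto simp: Ucoeff_def emon_def qint_def)
  next
    case 2
    moreover have "qint q (n + m) \<noteq> 0"
      using qint_pos[of q "n + m"] q n by simp
    ultimately show ?thesis
      using n by (simp add: Ucoeff_def emon_def)
  next
    case 3
    define p where "p = 1 / q"
    have p: "0 < p" "p < 1"
      using q by (auto simp: p_def)
    have integrand: "(\<lambda>t. pnk p (n - 2) (k - 1) (complex_of_real (t / q)) * emon j (t / q ^ (n - k)))
        = (\<lambda>t. pnk p (n - 2) (k - 1) (complex_of_real (t * p)) * emon j (t * p ^ (n - k)))" for j
      by (simp add: p_def power_one_over)
    have indices: "n - 2 - (k - 1) = n - k - 1" "k - 1 + j + 1 = k + j" "k + m + (n - k - 1) + 1 = n + m" for j
      using 3 by simp_all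
    have coeff: "Ucoeff n q (emon j) k = complex_of_real (qint p (n - 1) * q ^ (k - 1) *
        ((1 - p) * qbinom p (n - 2) (k - 1) * p ^ (k - 1) * p ^ ((n - k) * j) * qbeta_series p (n - k - 1) (k + j)))" for j
      using 3 unfolding Ucoeff_def p_def[symmetric] integrand qintegral_pnk_emon[OF p] indices by simp
    have "qbeta_series p (n - k - 1) (Suc (k + m))
        = (1 - p ^ (k + m)) / (1 - p ^ (n + m)) * qbeta_series p (n - k - 1) (k + m)"
      using qbeta_series_Suc[OF p, of "k + m" "n - k - 1"] 3 unfolding indices by simp
    then show ?thesis
      unfolding coeff qint_ratio_reciprocal[OF q k, symmetric] p_def[symmetric]
      by (simp add: power_add mult_ac)
  qed
qed

lemma qpoch_dilate:
  "(1 - z) * qpoch q N (complex_of_real q * z) = (1 - complex_of_real (q ^ N) * z) * qpoch q N z"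
proof (induction N)
  case 0
  then show ?case by (simp add: qpoch_def)
next
  case (Suc N)
  have "(1 - z) * qpoch q (Suc N) (complex_of_real q * z) =
      (1 - z) * qpoch q N (complex_of_real q * z) * (1 - complex_of_real (q ^ Suc N) * z)"
    by (simp add: qpoch_def mult_ac)
  also have "\<dots> = (1 - complex_of_real (q ^ Suc N) * z) * qpoch q (Suc N) z"
    unfolding Suc by (simp add: qpoch_def mult_ac)
  finally show ?case .
qed

lemma pnk_dilate:
  assumes "k \<le> n"
  shows "(1 - z) * pnk q n k (complex_of_real q * z)
    = complex_of_real (q ^ k) * (1 - complex_of_real (q ^ (n - k)) * z) * pnk q n k z"
proof -
  have "(1 - z) * pnk q n k (complex_of_real q * z) =
      complex_of_real (qbinom q n k) * (complex_of_real q * z) ^ k * ((1 - z) * qpoch q (n - k) (complex_of_real q * z))"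
    by (simp add: pnk_def mult_ac)
  then show ?thesis
    unfolding qpoch_dilate by (simp add: pnk_def power_mult_distrib mult_ac)
qed

lemma pnk_qdiff:
  assumes "k \<le> n"
  shows "(1 - z) * (pnk q n k (complex_of_real q * z) - pnk q n k z) =
    complex_of_real (q - 1) * pnk q n k z * (complex_of_real (qint q k) - complex_of_real (qint q n) * z)"
proof -
  have qint: "complex_of_real (q - 1) * complex_of_real (qint q i) = complex_of_real (q ^ i) - 1" for i
    by (simp only: of_real_mult[symmetric] qint_mult_pred) simp
  have "complex_of_real (q ^ n) = complex_of_real (q ^ k) * complex_of_real (q ^ (n - k))"
    using assms by (simp flip: power_add)
  then have "(1 - z) * (pnk q n k (complex_of_real q * z) - pnk q n k z)
      = pnk q n k z * ((complex_of_real (q ^ k) - 1) - (complex_of_real (q ^ n) - 1) * z)"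
    using pnk_dilate[OF assms, of z q] by (simp add: algebra_simps)
  then show ?thesis
    unfolding qint[symmetric] by (simp add: algebra_simps)
qed

text \<open>The q-analogue of z(1-z) p'_{n,k}(z) = (k - nz) p_{n,k}(z), extended linearly.\<close>
lemma Dq_sum_pnk:
  assumes q: "q \<noteq> 1"
  shows "z * (1 - z) * Dq q (\<lambda>z. \<Sum>k=0..n. c k * pnk q n k z) z =
    (\<Sum>k=0..n. c k * pnk q n k z * (complex_of_real (qint q k) - complex_of_real (qint q n) * z))"
proof (cases "z = 0")
  case True
  have vanish: "c k * pnk q n k 0 * complex_of_real (qint q k) = 0" for k
    by (cases k) (simp_all add: pnk_def qint_def)
  show ?thesis
    unfolding True by (simp add: vanish)
next
  case False
  have q1: "complex_of_real q - 1 \<noteq> 0"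
    using q by (metis of_real_1 of_real_eq_iff right_minus_eq)
  have "z * (1 - z) * Dq q (\<lambda>z. \<Sum>k=0..n. c k * pnk q n k z) z =
      (\<Sum>k=0..n. c k * ((1 - z) * (pnk q n k (complex_of_real q * z) - pnk q n k z))) / (complex_of_real q - 1)"
    using False q1 unfolding Dq_def by (simp add: sum_subtractf[symmetric] sum_distrib_left field_simps)
  also have "\<dots> = (\<Sum>k=0..n. c k * pnk q n k z * (complex_of_real (qint q k) - complex_of_real (qint q n) * z))"
    unfolding sum_divide_distrib using q1 by (intro sum.cong) (simp_all add: pnk_qdiff)
  finally show ?thesis .
qed

theorem mainTheorem7:
  fixes q :: real and m n :: nat and z :: complex
  assumes "q > 1" and "n \<ge> 1"
  shows "Uop n q (emon (m + 1)) z =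
           complex_of_real (q ^ m) * z * (1 - z) / complex_of_real (qint q (n + m))
             * Dq q (Uop n q (emon m)) z
         + (complex_of_real (q ^ m * qint q n) * z + complex_of_real (qint q m))
             / complex_of_real (qint q (n + m)) * Uop n q (emon m) z"
proof -
  note q = assms(1) and n = assms(2)
  define c where "c = Ucoeff n q (emon m)"
  define Q where "Q = complex_of_real (qint q (n + m))"
  have U: "Uop n q (emon m) = (\<lambda>z. \<Sum>k=0..n. c k * pnk q n k z)"
    unfolding c_def using Uop_eq_sum_Ucoeff[OF n] by blast
  have D: "z * (1 - z) * Dq q (Uop n q (emon m)) z =
      (\<Sum>k=0..n. c k * pnk q n k z * (complex_of_real (qint q k) - complex_of_real (qint q n) * z))"
    unfolding U using q by (intro Dq_sum_pnk) simp
  have "Uop n q (emon (m + 1)) z = (\<Sum>k=0..n. c k * pnk q n k z * complex_of_real (qint q (k + m))) / Q"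
    unfolding Uop_eq_sum_Ucoeff[OF n] sum_divide_distrib Q_def c_def
    by (intro sum.cong) (simp_all add: Ucoeff_emon_Suc[OF q _ n])
  also have "\<dots> = (complex_of_real (q ^ m) * (z * (1 - z) * Dq q (Uop n q (emon m)) z)
      + (complex_of_real (q ^ m * qint q n) * z + complex_of_real (qint q m)) * Uop n q (emon m) z) / Q"
    unfolding D unfolding U qint_add sum_distrib_left sum.distrib[symmetric]
    by (intro arg_cong[where f="\<lambda>x. x / Q"] sum.cong) (simp_all add: algebra_simps)
  finally show ?thesis
    unfolding Q_def by (simp add: add_divide_distrib distrib_left mult_ac)
qed

end
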